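(* Let $p\in[0,1]^N$. If $i\in\{\tilde k+1,\dots,N\}$, then $B^{\mathcal N}_{1:i}\le i-1$. In particular, if $\tilde k\le N-1$, then $B^{\mathcal N}_{1:\tilde k+1}=\tilde k$.
   Context: $q\in(0,1)$, $N\ge1$. Bins $B_i=\{x:(i-1)q/N\le x<iq/N\}$ for $i=1,\dots,N$. $B^{\mathcal N}_{1:i}=|\{j\in\{1,\dots,N\}:0\le p_j<iq/N\}|$ (with $B^{\mathcal N}_{1:0}=0$), and $\tilde k=\max\{i\in\{0,\dots,N\}:B^{\mathcal N}_{1:i}=i\}$ is the Benjamini–Hochberg rejection count. *)

theory Defs
  imports Main "HOL.Real"
begin

definition BN :: "real \<Rightarrow> nat \<Rightarrow> (nat \<Rightarrow> real) \<Rightarrow> nat \<Rightarrow> nat" where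
  "BN q N p i = card {j \<in> {1..N}. 0 \<le> p j \<and> p j < real i * q / real N}"

definition k_tilde :: "real \<Rightarrow> nat \<Rightarrow> (nat \<Rightarrow> real) \<Rightarrow> nat" where
  "k_tilde q N p = Max {i \<in> {0..N}. BN q N p i = i}"

end

theory Submission
  imports Defs
begin

text \<open>The count \<open>B i\<close> (the paper's \<open>B\<^sup>N\<^sub>1\<^sub>:\<^sub>i\<close>) is nondecreasing in \<open>i\<close> and never
  exceeds \<open>N\<close>. So if \<open>B i \<ge> i\<close> for some \<open>i \<le> N\<close>, then climbing from \<open>i\<close> towards \<open>N\<close> the
  count must meet the diagonal: \<open>B j = j\<close> for some \<open>i \<le> j \<le> N\<close>. Beyond the largest such
  fixed point \<open>k\<close> we therefore have \<open>B i < i\<close>, and squeezing \<open>k = B k \<le> B (k + 1) < k + 1\<close>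
  gives the second claim.\<close>

lemma mono_fixed_point_in_interval:
  fixes f :: "nat \<Rightarrow> nat"
  assumes "mono f" and "j \<le> n" and "j \<le> f j" and "f n \<le> n"
  shows "\<exists>i\<in>{j..n}. f i = i"
  using \<open>j \<le> n\<close> \<open>j \<le> f j\<close>
proof (induction j rule: inc_induct)
  case base
  with \<open>f n \<le> n\<close> show ?case by auto
next
  case (step m)
  show ?case
  proof (cases "f m = m")
    case True
    with step.hyps show ?thesis by auto
  next
    case False
    with step.prems have "Suc m \<le> f m" by simp
    also have "f m \<le> f (Suc m)" using \<open>mono f\<close> by (simp add: monoD)
    finally obtain i where "i \<in> {Suc m..n}" "f i = i" using step.IH by blast
    then show ?thesis by auto
  qed
qed

lemma BN_mono:
  assumes "0 \<le> q"
  shows "mono (BN q N p)"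
proof (rule monoI)
  fix i i' :: nat
  assume "i \<le> i'"
  with assms have "real i * q / real N \<le> real i' * q / real N"
    by (intro divide_right_mono mult_right_mono) auto
  then show "BN q N p i \<le> BN q N p i'"
    unfolding BN_def by (intro card_mono) auto
qed

lemma BN_le_N: "BN q N p i \<le> N"
proof -
  have "BN q N p i \<le> card {1..N}"
    unfolding BN_def by (intro card_mono) auto
  then show ?thesis by simp
qed

lemma BN_0 [simp]: "BN q N p 0 = 0"
  unfolding BN_def by simp

lemma
  shows BN_k_tilde: "BN q N p (k_tilde q N p) = k_tilde q N p"
    and k_tilde_greatest: "\<lbrakk>i \<le> N; BN q N p i = i\<rbrakk> \<Longrightarrow> i \<le> k_tilde q N p"
proof -
  let ?S = "{i \<in> {0..N}. BN q N p i = i}"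
  have "finite ?S" and "?S \<noteq> {}" by force+
  then have "k_tilde q N p \<in> ?S"
    unfolding k_tilde_def by (rule Max_in)
  moreover have "i \<le> k_tilde q N p" if "i \<in> ?S" for i
    unfolding k_tilde_def using \<open>finite ?S\<close> that by (rule Max_ge)
  ultimately show "BN q N p (k_tilde q N p) = k_tilde q N p"
    and "\<lbrakk>i \<le> N; BN q N p i = i\<rbrakk> \<Longrightarrow> i \<le> k_tilde q N p" by auto
qed

lemma BN_less_above_k_tilde:
  assumes "0 \<le> q" and "k_tilde q N p < i" and "i \<le> N"
  shows "BN q N p i < i"
proof (rule ccontr)
  assume "\<not> BN q N p i < i"
  then have "i \<le> BN q N p i" by simp
  from mono_fixed_point_in_interval[OF BN_mono[OF \<open>0 \<le> q\<close>] \<open>i \<le> N\<close> this BN_le_N]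
  obtain j where "j \<in> {i..N}" "BN q N p j = j" by blast
  with k_tilde_greatest have "j \<le> k_tilde q N p" by simp
  with \<open>j \<in> {i..N}\<close> \<open>k_tilde q N p < i\<close> show False by simp
qed

lemma BN_Suc_k_tilde:
  assumes "0 \<le> q" and "k_tilde q N p < N"
  shows "BN q N p (Suc (k_tilde q N p)) = k_tilde q N p"
proof -
  let ?k = "k_tilde q N p"
  have "?k = BN q N p ?k" by (simp add: BN_k_tilde)
  also have "\<dots> \<le> BN q N p (Suc ?k)" using BN_mono[OF assms(1)] by (simp add: monoD)
  finally show ?thesis
    using BN_less_above_k_tilde[OF assms(1), of N p "Suc ?k"] assms(2) by simp
qed

theorem lemma3:
  fixes q :: real and N :: nat and p :: "nat \<Rightarrow> real"
  assumes "0 < q" and "q < 1" and "N \<ge> 1"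
    and "\<forall>j\<in>{1..N}. 0 \<le> p j \<and> p j \<le> 1"
  shows "(\<forall>i\<in>{k_tilde q N p + 1..N}. BN q N p i \<le> i - 1)
     \<and> (k_tilde q N p \<le> N - 1 \<longrightarrow> BN q N p (k_tilde q N p + 1) = k_tilde q N p)"
proof -
  have "0 \<le> q" using \<open>0 < q\<close> by simp
  have "BN q N p i \<le> i - 1" if "i \<in> {k_tilde q N p + 1..N}" for i
    using BN_less_above_k_tilde[OF \<open>0 \<le> q\<close>, of N p i] that by simp
  moreover have "BN q N p (k_tilde q N p + 1) = k_tilde q N p" if "k_tilde q N p \<le> N - 1"
    using BN_Suc_k_tilde[OF \<open>0 \<le> q\<close>] that \<open>N \<ge> 1\<close> by simp
  ultimately show ?thesis by blast
qed

end
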